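(* Let $\mathfrak{g}$ be a finite-dimensional simple Lie algebra over $\mathbb{C}$ equipped with a $\mathbb{Z}_n$-grading $\mathfrak{g}=\bigoplus_{i\in\mathbb{Z}_n}\mathfrak{g}_i$ (so $[\mathfrak{g}_i,\mathfrak{g}_j]\subseteq\mathfrak{g}_{i+j}$). Let $j\in\mathbb{Z}_n$ and suppose $h\in\mathfrak{g}_j$ is a semisimple element with $[\mathfrak{g}_0,h]=0$. Then $h$ lies in the center of the subalgebra $\mathfrak{g}^{(j)}:=\bigoplus_{m\in\mathbb{Z}}\mathfrak{g}_{mj}$. In particular, if $j$ is a unit in $\mathbb{Z}_n$, then $h=0$.
   Context: $\mathfrak{g}_0$ denotes the grade-zero component, which is a (reductive) Lie subalgebra of $\mathfrak{g}$. The index $mj$ is computed in $\mathbb{Z}_n$. *)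

theory Defs
  imports Complex_Main
begin

definition lie_algebra :: "(complex \<Rightarrow> 'g::ab_group_add \<Rightarrow> 'g) \<Rightarrow> ('g \<Rightarrow> 'g \<Rightarrow> 'g) \<Rightarrow> bool" where
  "lie_algebra sm br \<longleftrightarrow>
     vector_space sm \<and>
     (\<forall>x y z. br (x + y) z = br x z + br y z) \<and>
     (\<forall>x y z. br x (y + z) = br x y + br x z) \<and>
     (\<forall>a x y. br (sm a x) y = sm a (br x y)) \<and>
     (\<forall>a x y. br x (sm a y) = sm a (br x y)) \<and>
     (\<forall>x. br x x = 0) \<and>
     (\<forall>x y z. br x (br y z) + br y (br z x) + br z (br x y) = 0)"

definition finite_dim :: "(complex \<Rightarrow> 'g::ab_group_add \<Rightarrow> 'g) \<Rightarrow> bool" where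
  "finite_dim sm \<longleftrightarrow> (\<exists>B. finite B \<and> module.span sm B = UNIV)"

definition lie_ideal :: "(complex \<Rightarrow> 'g::ab_group_add \<Rightarrow> 'g) \<Rightarrow> ('g \<Rightarrow> 'g \<Rightarrow> 'g) \<Rightarrow> 'g set \<Rightarrow> bool" where
  "lie_ideal sm br I \<longleftrightarrow> module.subspace sm I \<and> (\<forall>x y. y \<in> I \<longrightarrow> br x y \<in> I)"

definition simple_lie_algebra :: "(complex \<Rightarrow> 'g::ab_group_add \<Rightarrow> 'g) \<Rightarrow> ('g \<Rightarrow> 'g \<Rightarrow> 'g) \<Rightarrow> bool" where
  "simple_lie_algebra sm br \<longleftrightarrow> lie_algebra sm br \<and> (\<exists>x y. br x y \<noteq> 0) \<and>
     (\<forall>I. lie_ideal sm br I \<longrightarrow> I = {0} \<or> I = UNIV)"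

definition Zn_grading :: "(complex \<Rightarrow> 'g::ab_group_add \<Rightarrow> 'g) \<Rightarrow> ('g \<Rightarrow> 'g \<Rightarrow> 'g) \<Rightarrow> nat \<Rightarrow> (nat \<Rightarrow> 'g set) \<Rightarrow> bool" where
  "Zn_grading sm br n G \<longleftrightarrow> n \<ge> 1 \<and>
     (\<forall>i<n. module.subspace sm (G i)) \<and>
     (\<forall>x. \<exists>!f. (\<forall>i<n. f i \<in> G i) \<and> (\<forall>i\<ge>n. f i = 0) \<and> x = (\<Sum>i<n. f i)) \<and>
     (\<forall>i<n. \<forall>j<n. \<forall>x\<in>G i. \<forall>y\<in>G j. br x y \<in> G ((i + j) mod n))"

text \<open>Semisimple element: ad h is diagonalizable, i.e. g is spanned by eigenvectors of ad h.\<close>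
definition semisimple_element :: "(complex \<Rightarrow> 'g::ab_group_add \<Rightarrow> 'g) \<Rightarrow> ('g \<Rightarrow> 'g \<Rightarrow> 'g) \<Rightarrow> 'g \<Rightarrow> bool" where
  "semisimple_element sm br h \<longleftrightarrow> module.span sm {x. \<exists>c. br h x = sm c x} = UNIV"

definition graded_sub :: "(complex \<Rightarrow> 'g::ab_group_add \<Rightarrow> 'g) \<Rightarrow> nat \<Rightarrow> (nat \<Rightarrow> 'g set) \<Rightarrow> nat \<Rightarrow> 'g set" where
  "graded_sub sm n G j = module.span sm (\<Union>m. G ((m * j) mod n))"

definition in_center :: "('g::zero \<Rightarrow> 'g \<Rightarrow> 'g) \<Rightarrow> 'g set \<Rightarrow> 'g \<Rightarrow> bool" where
  "in_center br S h \<longleftrightarrow> h \<in> S \<and> (\<forall>y\<in>S. br h y = 0)"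

end

theory Submission imports Defs "HOL-Number_Theory.Cong" begin

text \<open>Since ad h maps g_i into g_(i+j), a suitable power (ad h)^k carries g_(mj) into g_0,
  which commutes with h; hence (ad h)^(k+1) vanishes on g_(mj). A diagonalizable operator has
  no nontrivial nilpotent part, so already ad h vanishes on every g_(mj), hence on g^(j).
  If j is a unit then g^(j) = g, and the center of a simple Lie algebra is zero.\<close>

fun shift_prod :: "(complex \<Rightarrow> 'g::ab_group_add \<Rightarrow> 'g) \<Rightarrow> ('g \<Rightarrow> 'g) \<Rightarrow> complex list \<Rightarrow> 'g \<Rightarrow> 'g"
  where
    "shift_prod sm A [] v = v"
  | "shift_prod sm A (c # cs) v = A (shift_prod sm A cs v) - sm c (shift_prod sm A cs v)"

locale vector_space_endo = vector_space sm + module_hom sm sm A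
  for sm :: "complex \<Rightarrow> 'g::ab_group_add \<Rightarrow> 'g" and A :: "'g \<Rightarrow> 'g"
begin

lemma shift_prod_add: "shift_prod sm A cs (x + y) = shift_prod sm A cs x + shift_prod sm A cs y"
  by (induction cs) (auto simp: add algebra_simps scale_right_distrib)

lemma shift_prod_scale: "shift_prod sm A cs (sm c x) = sm c (shift_prod sm A cs x)"
  by (induction cs) (auto simp: scale scale_right_diff_distrib scale_left_commute)

lemma shift_prod_diff: "shift_prod sm A cs (x - y) = shift_prod sm A cs x - shift_prod sm A cs y"
  using shift_prod_add[of cs "x - y" y] by (simp add: algebra_simps)

lemma shift_prod_zero [simp]: "shift_prod sm A cs 0 = 0"
  using shift_prod_scale[of cs 0 0] by simp

lemma shift_prod_commute_endo: "shift_prod sm A cs (A v) = A (shift_prod sm A cs v)"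
  by (induction cs) (auto simp: diff scale)

lemma shift_prod_commute:
  "shift_prod sm A cs (shift_prod sm A ds v) = shift_prod sm A ds (shift_prod sm A cs v)"
  by (induction cs) (auto simp: shift_prod_commute_endo shift_prod_diff shift_prod_scale)

lemma shift_prod_append:
  "shift_prod sm A (cs @ ds) v = shift_prod sm A cs (shift_prod sm A ds v)"
  by (induction cs) auto

lemma shift_prod_kernel: "A u = 0 \<Longrightarrow> shift_prod sm A cs u = sm (\<Prod>c\<leftarrow>cs. - c) u"
  by (induction cs) (auto simp: scale)

text \<open>The product of \<open>A - c\<close> over the nonzero eigenvalues \<open>c\<close> of the eigenvectors
  involved in \<open>z\<close> annihilates \<open>A z\<close>.\<close>

lemma shift_prod_annihilates_image_of_eigenspan:
  assumes "z \<in> span {x. \<exists>c. A x = sm c x}"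
  shows "\<exists>cs. 0 \<notin> set cs \<and> shift_prod sm A cs (A z) = 0"
  using assms
proof (induction rule: span_induct_alt)
  case base
  show ?case by (intro exI[of _ "[]"]) simp
next
  case (step a x y)
  obtain d where d: "A x = sm d x"
    using step(1) by auto
  obtain cs where cs: "0 \<notin> set cs" "shift_prod sm A cs (A y) = 0"
    using step(2) by auto
  define ds where "ds = (if d = 0 then [] else [d])"
  have ds: "0 \<notin> set ds" "shift_prod sm A ds (A x) = 0"
    using d by (auto simp: ds_def scale)
  have "shift_prod sm A (ds @ cs) (A (sm a x + y)) = 0"
    by (simp add: shift_prod_append add scale shift_prod_add shift_prod_scale cs(2) ds(2)
        shift_prod_commute[of ds cs])
  with cs ds show ?case
    by (intro exI[of _ "ds @ cs"]) auto
qed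

lemma diagonalizable_kernel_endo_square:
  assumes "span {x. \<exists>c. A x = sm c x} = UNIV" and "A (A z) = 0"
  shows "A z = 0"
proof -
  obtain cs where cs: "0 \<notin> set cs" "shift_prod sm A cs (A z) = 0"
    using shift_prod_annihilates_image_of_eigenspan[of z] assms(1) by auto
  have "sm (\<Prod>c\<leftarrow>cs. - c) (A z) = 0"
    using shift_prod_kernel[OF assms(2)] cs(2) by simp
  moreover have "(\<Prod>c\<leftarrow>cs. - c) \<noteq> 0"
    using cs(1) by (induction cs) auto
  ultimately show ?thesis by simp
qed

lemma diagonalizable_kernel_funpow:
  assumes "span {x. \<exists>c. A x = sm c x} = UNIV" and "(A ^^ Suc k) z = 0"
  shows "A z = 0"
  using assms(2)
proof (induction k)
  case 0
  then show ?case by simp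
next
  case (Suc k)
  have "A (A ((A ^^ k) z)) = 0"
    using Suc.prems by (simp add: funpow_swap1)
  then have "A ((A ^^ k) z) = 0"
    by (rule diagonalizable_kernel_endo_square[OF assms(1)])
  then show ?case
    using Suc.IH by (simp add: funpow_swap1)
qed

end

lemma lie_algebra_vector_space_endo_bracket:
  assumes "lie_algebra sm br"
  shows "vector_space_endo sm (br h)"
proof -
  interpret vector_space sm
    using assms by (simp add: lie_algebra_def)
  show ?thesis
    using assms by unfold_locales (simp_all add: lie_algebra_def)
qed

lemma lie_algebra_bracket_anticomm:
  assumes "lie_algebra sm br"
  shows "br x y = - br y x"
proof -
  have add_left: "br (u + v) w = br u w + br v w"
    and add_right: "br w (u + v) = br w u + br w v"
    and alt: "br u u = 0" for u v w
    using assms by (auto simp: lie_algebra_def)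
  have "br x y + br y x = 0"
    using alt[of "x + y"] unfolding add_left add_right by (simp add: alt add.commute)
  then show ?thesis by (simp add: eq_neg_iff_add_eq_0)
qed

lemma lie_ideal_center:
  assumes "lie_algebra sm br"
  shows "lie_ideal sm br {x. \<forall>y. br x y = 0}"
proof -
  interpret vector_space sm
    using assms by (simp add: lie_algebra_def)
  have add_left: "br (u + v) w = br u w + br v w"
    and scale_left: "br (sm c u) w = sm c (br u w)" for u v w c
    using assms by (auto simp: lie_algebra_def)
  have zero_left: "br 0 w = 0" for w
    using add_left[of 0 0 w] by simp
  have "br x y = 0" if "\<forall>w. br y w = 0" for x y
    using that lie_algebra_bracket_anticomm[OF assms, of x y] by simp
  then show ?thesis
    unfolding lie_ideal_def subspace_def by (simp add: add_left scale_left zero_left)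
qed

lemma simple_lie_algebra_central_eq_zero:
  assumes "simple_lie_algebra sm br" and "\<forall>y. br h y = 0"
  shows "h = 0"
proof -
  let ?Z = "{x. \<forall>y. br x y = 0}"
  have "lie_algebra sm br" and "\<exists>x y. br x y \<noteq> 0"
    and "lie_ideal sm br ?Z \<Longrightarrow> ?Z = {0} \<or> ?Z = UNIV"
    using assms(1) by (auto simp: simple_lie_algebra_def)
  then have "?Z = {0}"
    using lie_ideal_center by blast
  with assms(2) show ?thesis by auto
qed

lemma Zn_grading_bracket_funpow:
  assumes "Zn_grading sm br n G" and "j < n" and "h \<in> G j" and "i < n" and "y \<in> G i"
  shows "(br h ^^ k) y \<in> G ((i + k * j) mod n)"
proof (induction k)
  case 0
  then show ?case using assms(4,5) by simp
next
  case (Suc k)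
  have "br h ((br h ^^ k) y) \<in> G ((j + (i + k * j) mod n) mod n)"
    using assms(1-3) Suc by (auto simp: Zn_grading_def)
  moreover have "(j + (i + k * j) mod n) mod n = (i + Suc k * j) mod n"
    by (simp add: mod_add_right_eq add_ac)
  ultimately show ?case by simp
qed

lemma graded_sub_eq_UNIV_if_coprime:
  assumes "vector_space sm" and "Zn_grading sm br n G" and "coprime j n"
  shows "graded_sub sm n G j = UNIV"
proof -
  interpret vector_space sm
    by (rule assms(1))
  obtain u where u: "[j * u = 1] (mod n)"
    using cong_solve_coprime_nat[OF assms(3)] by auto
  have component: "G i \<subseteq> graded_sub sm n G j" if "i < n" for i
  proof -
    have "(u * i * j) mod n = (i * ((j * u) mod n)) mod n"
      by (simp add: mod_mult_right_eq ac_simps)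
    also have "\<dots> = i"
      using u that by (simp add: cong_def mod_mult_right_eq)
    finally show ?thesis
      unfolding graded_sub_def by (auto intro!: span_base exI[of _ "u * i"])
  qed
  have "y \<in> graded_sub sm n G j" for y
  proof -
    obtain f where f: "\<forall>i<n. f i \<in> G i" "y = (\<Sum>i<n. f i)"
      using assms(2) unfolding Zn_grading_def by blast
    show ?thesis
      unfolding f(2) graded_sub_def
      by (rule span_sum) (use component f(1) in \<open>auto simp: graded_sub_def\<close>)
  qed
  then show ?thesis by auto
qed

lemma Zn_grading_semisimple_bracket_vanishes:
  assumes "lie_algebra sm br" and "Zn_grading sm br n G" and "j < n" and "h \<in> G j"
    and "semisimple_element sm br h" and "\<forall>x\<in>G 0. br x h = 0"
    and "y \<in> G ((m * j) mod n)"
  shows "br h y = 0"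
proof -
  interpret vector_space_endo sm "br h"
    by (rule lie_algebra_vector_space_endo_bracket[OF assms(1)])
  have "n \<ge> 1"
    using assms(2) by (simp add: Zn_grading_def)
  define k where "k = (n - 1) * m"
  have "m * j + k * j = n * (m * j)"
    using \<open>n \<ge> 1\<close> by (simp add: k_def algebra_simps)
  then have "(m * j mod n + k * j) mod n = 0"
    by (simp add: mod_add_left_eq)
  then have "(br h ^^ k) y \<in> G 0"
    using Zn_grading_bracket_funpow[OF assms(2-4) _ assms(7), of k] \<open>n \<ge> 1\<close> by simp
  then have "br ((br h ^^ k) y) h = 0"
    using assms(6) by blast
  then have "(br h ^^ Suc k) y = 0"
    using lie_algebra_bracket_anticomm[OF assms(1), of h "(br h ^^ k) y"] by simp
  then show ?thesis
    using diagonalizable_kernel_funpow assms(5) unfolding semisimple_element_def by blast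
qed

theorem proposition1p4:
  fixes sm :: "complex \<Rightarrow> 'g::ab_group_add \<Rightarrow> 'g"
    and br :: "'g \<Rightarrow> 'g \<Rightarrow> 'g"
    and n j :: nat and G :: "nat \<Rightarrow> 'g set" and h :: 'g
  assumes "simple_lie_algebra sm br"
    and "finite_dim sm"
    and "Zn_grading sm br n G"
    and "j < n"
    and "h \<in> G j"
    and "semisimple_element sm br h"
    and "\<forall>x\<in>G 0. br x h = 0"
  shows "in_center br (graded_sub sm n G j) h \<and> (coprime j n \<longrightarrow> h = 0)"
proof -
  have lie: "lie_algebra sm br"
    using assms(1) by (simp add: simple_lie_algebra_def)
  interpret vector_space_endo sm "br h"
    by (rule lie_algebra_vector_space_endo_bracket[OF lie])
  have "h \<in> graded_sub sm n G j"
    unfolding graded_sub_def using assms(4,5) by (auto intro!: span_base exI[of _ 1])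
  moreover have central: "br h y = 0" if "y \<in> graded_sub sm n G j" for y
    using that unfolding graded_sub_def
  proof (induction rule: span_induct_alt)
    case (step c x y)
    then show ?case
      using Zn_grading_semisimple_bracket_vanishes[OF lie assms(3-7)] by (auto simp: add scale)
  qed simp
  moreover have "h = 0" if "coprime j n"
    using simple_lie_algebra_central_eq_zero[OF assms(1)] central
      graded_sub_eq_UNIV_if_coprime[OF vector_space_axioms assms(3) that] by blast
  ultimately show ?thesis
    unfolding in_center_def by blast
qed

end
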